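(* For every integer $i\ge 1$, $\lim_{k\to\infty}\overline{\alpha}(\{1,2i,k\})=\frac{i}{2i+1}$.
   Context: For a finite set $S$ of positive integers, the distance graph $G(S)$ has vertex set $\mathbb{Z}$, with $i,j$ adjacent iff $|i-j|\in S$. The density of $A\subseteq\mathbb{Z}$ is $\delta(A)=\limsup_{N\to\infty}\frac{|A\cap[-N,N]|}{2N+1}$, and the independence ratio $\overline{\alpha}(S)$ is the supremum of $\delta(A)$ over independent sets $A$ of $G(S)$. *)

theory Defs
  imports "HOL-Analysis.Analysis"
begin

definition dist_adj :: "nat set \<Rightarrow> int \<Rightarrow> int \<Rightarrow> bool" where
  "dist_adj S i j \<longleftrightarrow> nat \<bar>i - j\<bar> \<in> S \<and> i \<noteq> j"

definition indep_set :: "nat set \<Rightarrow> int set \<Rightarrow> bool" where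
  "indep_set S A \<longleftrightarrow> (\<forall>i\<in>A. \<forall>j\<in>A. \<not> dist_adj S i j)"

definition density :: "int set \<Rightarrow> ereal" where
  "density A = limsup (\<lambda>N::nat. ereal (real (card (A \<inter> {- int N .. int N})) / real (2 * N + 1)))"

definition indep_ratio :: "nat set \<Rightarrow> ereal" where
  "indep_ratio S = (SUP A \<in> {A. indep_set S A}. density A)"

end

theory Submission
  imports Defs "HOL-Real_Asymp.Real_Asymp"
begin

text \<open>
  Upper bound: since \<open>1\<close> and \<open>2i\<close> are forbidden distances, an independent set misses the first
  or the last point of every window of \<open>2i + 1\<close> consecutive integers, and the remaining \<open>2i\<close>
  points form \<open>i\<close> pairs of neighbours; so every such window holds at most \<open>i\<close> points and the
  density is at most \<open>i/(2i + 1)\<close>.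

  Lower bound: modulo \<open>P = k - 1\<close> the distance \<open>k\<close> acts like the distance \<open>1\<close>. Fill each period
  with \<open>q\<close> blocks of length \<open>2i + 1\<close>, taking the odd positions of every block, and leave at least
  \<open>2i\<close> residues empty before the next period. Shifting an odd position of a block by \<open>1\<close> or
  \<open>2i\<close> lands on an even position or in the gap, so the set is independent; with the largest
  such \<open>q \<ge> P/(2i + 1) - 2\<close> its density \<open>iq/P\<close> is at least \<open>i/(2i + 1) - 2i/(k - 1)\<close>.
\<close>

lemma card_Int_consecutive_blocks:
  fixes A :: "int set"
  shows "card (A \<inter> {a ..< a + int n * int w})
    = (\<Sum>j<n. card (A \<inter> {a + int j * int w ..< a + int j * int w + int w}))"
proof (induction n)
  case 0
  show ?case by simp
next
  case (Suc n)
  let ?b = "a + int n * int w"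
  have "{a ..< a + int (Suc n) * int w} = {a ..< ?b} \<union> {?b ..< ?b + int w}"
    by (subst ivl_disj_un_two(3)) (simp_all add: algebra_simps)
  then have "A \<inter> {a ..< a + int (Suc n) * int w} = A \<inter> {a ..< ?b} \<union> A \<inter> {?b ..< ?b + int w}"
    by blast
  then show ?case
    using Suc by (simp add: card_Un_disjoint disjoint_iff)
qed

lemma card_periodic_Int_window:
  fixes B :: "int set" and P :: nat
  assumes "P > 0"
  shows "card ({x. x mod int P \<in> B} \<inter> {a ..< a + int P}) = card (B \<inter> {0 ..< int P})"
proof (rule bij_betw_same_card[of "\<lambda>x. x mod int P"], rule bij_betwI')
  fix x y
  assume "x \<in> {x. x mod int P \<in> B} \<inter> {a ..< a + int P}" "y \<in> {x. x mod int P \<in> B} \<inter> {a ..< a + int P}"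
  then have "\<bar>x - y\<bar> < int P" by auto
  then show "(x mod int P = y mod int P) = (x = y)"
    by (metis mod_eq_dvd_iff dvd_imp_le_int abs_of_nat eq_iff_diff_eq_0 linorder_not_le)
next
  fix x assume "x \<in> {x. x mod int P \<in> B} \<inter> {a ..< a + int P}"
  then show "x mod int P \<in> B \<inter> {0 ..< int P}"
    using assms by auto
next
  fix r assume r: "r \<in> B \<inter> {0 ..< int P}"
  define x where "x = a + (r - a) mod int P"
  have "x mod int P = r" and "x \<in> {a ..< a + int P}"
    using r assms by (simp_all add: x_def mod_add_right_eq)
  then show "\<exists>x\<in>{x. x mod int P \<in> B} \<inter> {a ..< a + int P}. r = x mod int P"
    using r by auto
qed

lemma tendsto_ereal_add_div_odd:
  "(\<lambda>N::nat. ereal (L + C / real (2 * N + 1))) \<longlonglongrightarrow> ereal L"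
proof -
  have "(\<lambda>N::nat. L + C / real (2 * N + 1)) \<longlonglongrightarrow> L + 0"
    by (intro tendsto_add tendsto_const) real_asymp
  then show ?thesis
    by (simp add: tendsto_ereal)
qed

lemma density_le_of_window_card_le:
  fixes A :: "int set"
  assumes "w > 0" and window: "\<And>x. card (A \<inter> {x ..< x + int w}) \<le> c"
  shows "density A \<le> ereal (real c / real w)"
proof -
  have ratio: "real (card (A \<inter> {- int N .. int N})) / real (2 * N + 1)
      \<le> real c / real w + real c / real (2 * N + 1)" for N
  proof -
    define m where "m = (2 * N + 1) div w + 1"
    have "m * w = (2 * N + 1) div w * w + w"
      by (simp add: m_def algebra_simps)
    then have "2 * N + 1 \<le> m * w" and mw: "m * w \<le> 2 * N + 1 + w"
      using div_mult_mod_eq[of "2 * N + 1" w] mod_less_divisor[OF assms(1), of "2 * N + 1"] by linarith+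
    then have "{- int N .. int N} \<subseteq> {- int N ..< - int N + int m * int w}"
      by (auto simp flip: of_nat_mult)
    then have "card (A \<inter> {- int N .. int N}) \<le> card (A \<inter> {- int N ..< - int N + int m * int w})"
      by (intro card_mono) auto
    also have "\<dots> \<le> m * c"
      unfolding card_Int_consecutive_blocks using sum_mono[of "{..<m}", OF window] by simp
    finally have "card (A \<inter> {- int N .. int N}) * w \<le> (m * w) * c"
      by (simp add: algebra_simps)
    also have "\<dots> \<le> (2 * N + 1 + w) * c"
      using mw by (rule mult_right_mono) simp
    finally have "real (card (A \<inter> {- int N .. int N})) * real w \<le> (real (2 * N + 1) + real w) * real c"
      by (simp only: of_nat_add[symmetric] of_nat_mult[symmetric] of_nat_le_iff)
    moreover have "a / X \<le> real c / real w + real c / X"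
      if "X > 0" and "a * real w \<le> (X + real w) * real c" for a X :: real
    proof -
      have "a / X \<le> (X + real w) * real c / (real w * X)"
        using that assms(1) by (simp add: field_simps)
      also have "\<dots> = real c / real w + real c / X"
        using that assms(1) by (simp add: field_simps)
      finally show ?thesis .
    qed
    ultimately show ?thesis
      by simp
  qed
  have "density A \<le> limsup (\<lambda>N::nat. ereal (real c / real w + real c / real (2 * N + 1)))"
    unfolding density_def using ratio by (intro Limsup_mono always_eventually) simp
  also have "\<dots> = ereal (real c / real w)"
    by (rule lim_imp_Limsup[OF _ tendsto_ereal_add_div_odd]) simp
  finally show ?thesis .
qed

lemma density_ge_of_window_card_ge:
  fixes A :: "int set"
  assumes "w > 0" and window: "\<And>x. c \<le> card (A \<inter> {x ..< x + int w})"
  shows "ereal (real c / real w) \<le> density A"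
proof -
  have ratio: "real c / real w + (- real c) / real (2 * N + 1)
      \<le> real (card (A \<inter> {- int N .. int N})) / real (2 * N + 1)" for N
  proof -
    define m where "m = (2 * N + 1) div w"
    have mw: "m * w \<le> 2 * N + 1" and "2 * N + 1 \<le> m * w + w"
      using div_mult_mod_eq[of "2 * N + 1" w] mod_less_divisor[OF assms(1), of "2 * N + 1"]
      unfolding m_def by linarith+
    have "m * c \<le> card (A \<inter> {- int N ..< - int N + int m * int w})"
      unfolding card_Int_consecutive_blocks using sum_mono[of "{..<m}", OF window] by simp
    also have "\<dots> \<le> card (A \<inter> {- int N .. int N})"
      using mw by (intro card_mono) (auto simp flip: of_nat_mult)
    finally have card_ge: "m * c \<le> card (A \<inter> {- int N .. int N})" .
    have "(2 * N + 1) * c \<le> (m * w + w) * c"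
      using \<open>2 * N + 1 \<le> m * w + w\<close> by (rule mult_right_mono) simp
    also have "\<dots> = (m * c + c) * w"
      by (simp add: algebra_simps)
    also have "\<dots> \<le> (card (A \<inter> {- int N .. int N}) + c) * w"
      using card_ge by simp
    finally have "real (2 * N + 1) * real c \<le> (real (card (A \<inter> {- int N .. int N})) + real c) * real w"
      by (simp only: of_nat_add[symmetric] of_nat_mult[symmetric] of_nat_le_iff)
    moreover have "real c / real w + (- real c) / X \<le> a / X"
      if "X > 0" and "X * real c \<le> (a + real c) * real w" for a X :: real
    proof -
      have "real c / real w \<le> (a + real c) / X"
        using that assms(1) by (simp add: field_simps)
      then show ?thesis
        by (simp add: add_divide_distrib)
    qed
    ultimately show ?thesis
      by simp
  qed
  have "ereal (real c / real w) = liminf (\<lambda>N::nat. ereal (real c / real w + (- real c) / real (2 * N + 1)))"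
    by (rule lim_imp_Liminf[OF _ tendsto_ereal_add_div_odd, symmetric]) simp
  also have "\<dots> \<le> liminf (\<lambda>N::nat. ereal (real (card (A \<inter> {- int N .. int N})) / real (2 * N + 1)))"
    using ratio by (intro Liminf_mono always_eventually) simp
  also have "\<dots> \<le> density A"
    unfolding density_def by (rule Liminf_le_Limsup) simp
  finally show ?thesis .
qed

lemma indep_set_iff_no_shift:
  "indep_set S A \<longleftrightarrow> (\<forall>x\<in>A. \<forall>d\<in>S. d \<noteq> 0 \<longrightarrow> x + int d \<notin> A)"
proof
  assume "indep_set S A"
  then show "\<forall>x\<in>A. \<forall>d\<in>S. d \<noteq> 0 \<longrightarrow> x + int d \<notin> A"
    unfolding indep_set_def dist_adj_def by force
next
  assume no_shift: "\<forall>x\<in>A. \<forall>d\<in>S. d \<noteq> 0 \<longrightarrow> x + int d \<notin> A"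
  show "indep_set S A"
    unfolding indep_set_def dist_adj_def
  proof (intro ballI notI)
    fix x y assume "x \<in> A" "y \<in> A" and adj: "nat \<bar>x - y\<bar> \<in> S \<and> x \<noteq> y"
    define d where "d = nat \<bar>x - y\<bar>"
    have "d \<in> S" "d \<noteq> 0"
      using adj by (auto simp: d_def)
    moreover have "x + int d = y \<or> y + int d = x"
      by (cases "x \<le> y") (auto simp: d_def)
    ultimately show False
      using no_shift \<open>x \<in> A\<close> \<open>y \<in> A\<close> by metis
  qed
qed

lemma card_indep_Int_pairs_le:
  assumes "indep_set S A" and "1 \<in> S"
  shows "card (A \<inter> {a ..< a + int n * 2}) \<le> n"
proof -
  have pair: "card (A \<inter> {b ..< b + 2}) \<le> 1" for b
  proof -
    have "b \<notin> A \<or> b + int 1 \<notin> A"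
      using assms unfolding indep_set_iff_no_shift by blast
    moreover have "{b ..< b + 2} = {b, b + 1}"
      by auto
    ultimately show ?thesis
      by (auto simp: Int_insert_right)
  qed
  have "card (A \<inter> {a ..< a + int n * 2}) = (\<Sum>j<n. card (A \<inter> {a + int j * 2 ..< a + int j * 2 + 2}))"
    using card_Int_consecutive_blocks[of A a n 2] by simp
  also have "\<dots> \<le> n"
    using sum_mono[of "{..<n}", OF pair] by simp
  finally show ?thesis .
qed

lemma card_indep_Int_window_le:
  assumes "indep_set S A" and "1 \<in> S" and "2 * i \<in> S" and "i \<ge> 1"
  shows "card (A \<inter> {a ..< a + int (2 * i + 1)}) \<le> i"
proof (cases "a \<in> A")
  case True
  moreover have "2 * i \<noteq> 0"
    using assms(4) by simp
  ultimately have "a + int (2 * i) \<notin> A"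
    using assms(1,3) unfolding indep_set_iff_no_shift by blast
  then have "A \<inter> {a ..< a + int (2 * i + 1)} \<subseteq> A \<inter> {a ..< a + int i * 2}"
    by (auto simp: less_le mult.commute)
  then show ?thesis
    using card_indep_Int_pairs_le[OF assms(1,2)] by (meson card_mono finite_Int finite_atLeastLessThan_int le_trans)
next
  case False
  then have "A \<inter> {a ..< a + int (2 * i + 1)} \<subseteq> A \<inter> {a + 1 ..< a + 1 + int i * 2}"
    by (auto simp: le_less)
  then show ?thesis
    using card_indep_Int_pairs_le[OF assms(1,2)] by (meson card_mono finite_Int finite_atLeastLessThan_int le_trans)
qed

lemma indep_ratio_le:
  assumes "1 \<in> S" and "2 * i \<in> S" and "i \<ge> 1"
  shows "indep_ratio S \<le> ereal (real i / real (2 * i + 1))"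
  unfolding indep_ratio_def
proof (rule SUP_least)
  fix A assume "A \<in> {A. indep_set S A}"
  then show "density A \<le> ereal (real i / real (2 * i + 1))"
    using card_indep_Int_window_le[OF _ assms] by (intro density_le_of_window_card_le) auto
qed

lemma odd_mod_shift_even:
  fixes r :: int
  assumes "odd (r mod int (2 * n + 1))"
  shows "even ((r + 1) mod int (2 * n + 1))" and "even ((r + 2 * int n) mod int (2 * n + 1))"
proof -
  define s where "s = r mod int (2 * n + 1)"
  have "0 \<le> s" and "s < int (2 * n + 1)" and "odd s"
    using assms pos_mod_bound[of "int (2 * n + 1)" r] by (simp_all add: s_def)
  then have s: "1 \<le> s" "s \<le> 2 * int n - 1"
    by (auto simp: le_less elim: oddE)
  have "(r + 1) mod int (2 * n + 1) = (s + 1) mod int (2 * n + 1)"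
    by (simp add: s_def mod_add_left_eq)
  also have "\<dots> = s + 1"
    using s by (intro mod_pos_pos_trivial) auto
  finally show "even ((r + 1) mod int (2 * n + 1))"
    using \<open>odd s\<close> by simp
  have "(r + 2 * int n) mod int (2 * n + 1) = (s + 2 * int n) mod int (2 * n + 1)"
    by (simp add: s_def mod_add_left_eq)
  also have "\<dots> = (s - 1 + int (2 * n + 1)) mod int (2 * n + 1)"
    by (simp add: algebra_simps)
  also have "\<dots> = (s - 1) mod int (2 * n + 1)"
    by (rule mod_add_self2)
  also have "\<dots> = s - 1"
    using s by (intro mod_pos_pos_trivial) auto
  finally show "even ((r + 2 * int n) mod int (2 * n + 1))"
    using \<open>odd s\<close> by simp
qed

definition odd_block_residues :: "nat \<Rightarrow> nat \<Rightarrow> int set" where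
  "odd_block_residues i q = {r. 0 \<le> r \<and> r < int ((2 * i + 1) * q) \<and> odd (r mod int (2 * i + 1))}"

lemma card_odd_Int_atLeastLessThan:
  "card ({r :: int. odd r} \<inter> {0 ..< int (2 * n + 1)}) = n"
proof -
  have "{r :: int. odd r} \<inter> {0 ..< int (2 * n + 1)} = (\<lambda>l. 2 * int l + 1) ` {..<n}"
  proof (intro equalityI subsetI)
    fix r assume "r \<in> {r :: int. odd r} \<inter> {0 ..< int (2 * n + 1)}"
    then obtain b where "r = 2 * b + 1" "0 \<le> b" "b < int n"
      by (auto elim!: oddE)
    then show "r \<in> (\<lambda>l. 2 * int l + 1) ` {..<n}"
      by (intro image_eqI[of _ _ "nat b"]) auto
  qed auto
  moreover have "inj_on (\<lambda>l. 2 * int l + 1) {..<n}"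
    by (rule inj_onI) simp
  ultimately show ?thesis
    by (simp add: card_image)
qed

lemma card_odd_block_residues:
  "card (odd_block_residues i q) = i * q"
proof -
  let ?w = "2 * i + 1"
  have "odd_block_residues i q = {x. x mod int ?w \<in> {r. odd r}} \<inter> {0 ..< 0 + int q * int ?w}"
    by (auto simp: odd_block_residues_def algebra_simps)
  then have "card (odd_block_residues i q)
      = (\<Sum>j<q. card ({x. x mod int ?w \<in> {r. odd r}} \<inter> {0 + int j * int ?w ..< 0 + int j * int ?w + int ?w}))"
    by (simp only: card_Int_consecutive_blocks)
  also have "\<dots> = (\<Sum>j<q. i)"
    using card_periodic_Int_window[of ?w "{r. odd r}"] card_odd_Int_atLeastLessThan[of i] by simp
  finally show ?thesis
    by simp
qed

lemma indep_periodic_odd_block_residues: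
  assumes "i \<ge> 1" and room: "(2 * i + 1) * q + 2 * i \<le> P"
  shows "indep_set {1, 2 * i, P + 1} {x. x mod int P \<in> odd_block_residues i q}"
  unfolding indep_set_iff_no_shift
proof (intro ballI impI)
  fix x d
  assume "x \<in> {x. x mod int P \<in> odd_block_residues i q}" and d: "d \<in> {1, 2 * i, P + 1}"
  then have x: "x mod int P < int ((2 * i + 1) * q)" "odd (x mod int P mod int (2 * i + 1))"
    by (auto simp: odd_block_residues_def)
  have "P > 0"
    using assms by simp
  have "int ((2 * i + 1) * q + 2 * i) \<le> int P"
    using room by (simp only: of_nat_le_iff)
  then have room_int: "int ((2 * i + 1) * q) + 2 * int i \<le> int P"
    by simp
  obtain e where "e = 1 \<or> e = 2 * int i" and e: "(x + int d) mod int P = x mod int P + e"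
  proof -
    have small: "(x mod int P + e) mod int P = x mod int P + e" if "e = 1 \<or> e = 2 * int i" for e
      using that x(1) room_int assms(1) \<open>P > 0\<close> by (intro mod_pos_pos_trivial) auto
    consider "d = 1" | "d = 2 * i" | "d = P + 1"
      using d by blast
    then show thesis
    proof cases
      case 1
      then show thesis
        using that[of 1] small[of 1] by (simp add: mod_add_left_eq)
    next
      case 2
      then show thesis
        using that[of "2 * int i"] small[of "2 * int i"] by (simp add: mod_add_left_eq)
    next
      case 3
      then have "x + int d = (x + 1) + int P"
        by simp
      then have "(x + int d) mod int P = (x + 1) mod int P"
        by (simp only: mod_add_self2)
      then show thesis
        using that[of 1] small[of 1] by (simp add: mod_add_left_eq)
    qed
  qed
  then have "even ((x + int d) mod int P mod int (2 * i + 1))"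
    using odd_mod_shift_even[OF x(2)] by auto
  then show "x + int d \<notin> {x. x mod int P \<in> odd_block_residues i q}"
    by (simp add: odd_block_residues_def)
qed

lemma indep_ratio_ge_periodic_odd_block_residues:
  assumes "i \<ge> 1" and room: "(2 * i + 1) * q + 2 * i \<le> P"
  shows "ereal (real (i * q) / real P) \<le> indep_ratio {1, 2 * i, P + 1}"
proof -
  let ?A = "{x. x mod int P \<in> odd_block_residues i q}"
  have "P > 0"
    using assms by simp
  have "int ((2 * i + 1) * q) \<le> int P"
    using room by (simp only: of_nat_le_iff)
  then have "odd_block_residues i q \<inter> {0 ..< int P} = odd_block_residues i q"
    by (auto simp: odd_block_residues_def)
  then have "card (?A \<inter> {x ..< x + int P}) = i * q" for x
    using card_periodic_Int_window[OF \<open>P > 0\<close>] card_odd_block_residues by simp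
  then have "ereal (real (i * q) / real P) \<le> density ?A"
    using \<open>P > 0\<close> by (intro density_ge_of_window_card_ge) auto
  also have "\<dots> \<le> indep_ratio {1, 2 * i, P + 1}"
    unfolding indep_ratio_def
    by (rule SUP_upper) (rule CollectI, rule indep_periodic_odd_block_residues[OF assms])
  finally show ?thesis .
qed

lemma indep_ratio_ge:
  assumes "i \<ge> 1" and "k \<ge> 2 * i + 2"
  shows "ereal (real i / real (2 * i + 1) - 2 * real i / (real k - 1)) \<le> indep_ratio {1, 2 * i, k}"
proof -
  define P where "P = k - 1"
  define q where "q = (P - 2 * i) div (2 * i + 1)"
  have "P \<ge> 2 * i + 1" and k: "k = P + 1"
    using assms(2) by (simp_all add: P_def)
  have q_div: "q * (2 * i + 1) \<le> P - 2 * i" "P - 2 * i < q * (2 * i + 1) + (2 * i + 1)"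
    using div_mult_mod_eq[of "P - 2 * i" "2 * i + 1"] mod_less_divisor[of "2 * i + 1" "P - 2 * i"]
    unfolding q_def by linarith+
  then have "(2 * i + 1) * q + 2 * i \<le> P"
    using \<open>P \<ge> 2 * i + 1\<close> by (simp add: mult.commute)
  then have lower: "ereal (real (i * q) / real P) \<le> indep_ratio {1, 2 * i, k}"
    unfolding k by (rule indep_ratio_ge_periodic_odd_block_residues[OF assms(1)])
  have "P \<le> (2 * i + 1) * q + 2 * (2 * i + 1)"
    using q_div by (simp add: algebra_simps)
  then have "real P \<le> real ((2 * i + 1) * q + 2 * (2 * i + 1))"
    by (rule of_nat_mono)
  also have "\<dots> = real (2 * i + 1) * real q + 2 * real (2 * i + 1)"
    by (simp add: algebra_simps)
  finally have key: "real i * real P \<le> real i * (real (2 * i + 1) * real q + 2 * real (2 * i + 1))"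
    by (rule mult_left_mono) simp
  have frac: "real i / w - 2 * real i / p \<le> real i * real q / p"
    if "p > 0" and "w > 0" and "real i * p \<le> real i * (w * real q + 2 * w)" for p w :: real
  proof -
    have "real i / w \<le> (real i * real q + 2 * real i) / p"
      using that by (simp add: field_simps)
    then show ?thesis
      by (simp add: add_divide_distrib)
  qed
  have "real P > 0"
    using \<open>P \<ge> 2 * i + 1\<close> by simp
  then have "real i / real (2 * i + 1) - 2 * real i / real P \<le> real i * real q / real P"
    by (rule frac[OF _ _ key]) simp
  moreover have "real k - 1 = real P"
    using k by simp
  ultimately have "ereal (real i / real (2 * i + 1) - 2 * real i / (real k - 1)) \<le> ereal (real (i * q) / real P)"
    by (simp only: ereal_less_eq(3) of_nat_mult)
  then show ?thesis
    using lower by (rule order_trans)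
qed

theorem theorem24:
  fixes i :: nat
  assumes "i \<ge> 1"
  shows "(\<lambda>k::nat. indep_ratio {1, 2 * i, k}) \<longlonglongrightarrow> ereal (real i / real (2 * i + 1))"
proof (rule tendsto_sandwich)
  show "\<forall>\<^sub>F k in sequentially. ereal (real i / real (2 * i + 1) - 2 * real i / (real k - 1)) \<le> indep_ratio {1, 2 * i, k}"
    using indep_ratio_ge[OF assms] by (intro eventually_sequentiallyI[of "2 * i + 2"])
  show "\<forall>\<^sub>F k in sequentially. indep_ratio {1, 2 * i, k} \<le> ereal (real i / real (2 * i + 1))"
    using indep_ratio_le[OF _ _ assms] by simp
  have "(\<lambda>k::nat. real i / real (2 * i + 1) - 2 * real i / (real k - 1)) \<longlonglongrightarrow> real i / real (2 * i + 1)"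
    by real_asymp
  then show "(\<lambda>k. ereal (real i / real (2 * i + 1) - 2 * real i / (real k - 1))) \<longlonglongrightarrow> ereal (real i / real (2 * i + 1))"
    by (rule tendsto_ereal)
qed (rule tendsto_const)

end
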